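(* Let $n$ be even, $k\le n/2$, let ${\mathbf{H}}$ be chosen uniformly at random in $\mathbb{F}_3^{(n/2-k)\times n/2}$, and let $d\in\{1,\dots,k\}$. Set $R=k/(n/2)$, $\delta=d/(n/2)$, and $$\gamma=\min_{x>0}\Big((1-R+\delta)\log_3\frac{1+3x}{x}+(R-\delta)\log_3(1+x)\Big)-1+R.$$ Call a subset ${\mathcal E}\subseteq\{1,\dots,n/2\}$ of size $k-d$ good for ${\mathbf{H}}$ if the submatrix of ${\mathbf{H}}$ formed by the columns indexed by the complement of ${\mathcal E}$ has full rank $n/2-k$. Let ${\mathcal J}^{\mathrm{unif}}$ be uniformly distributed over the subsets of $\{1,\dots,n/2\}$ of size $k-d$ and ${\mathcal J}_{{\mathbf{H}}}$ uniformly distributed over those subsets of size $k-d$ that are good for ${\mathbf{H}}$. Then $$\mathbb{P}_{{\mathbf{H}}}\Big(\rho({\mathcal J}^{\mathrm{unif}},{\mathcal J}_{{\mathbf{H}}})>\frac{1}{3^d}\Big)\le\frac{2}{\binom{n/2}{k-d}}\big(3^d+2\cdot3^{2d+\gamma n/2}\big).$$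
   Context: $\rho$ denotes the statistical distance between two distributions on the same finite set: $\rho({\mathcal D}_0,{\mathcal D}_1)=\frac12\sum_x|{\mathcal D}_0(x)-{\mathcal D}_1(x)|$. *)

theory Defs
  imports "Jordan_Normal_Form.DL_Rank" "Jordan_Normal_Form.DL_Submatrix"
begin

definition stat_dist :: "'a set \<Rightarrow> ('a \<Rightarrow> real) \<Rightarrow> ('a \<Rightarrow> real) \<Rightarrow> real" where
  "stat_dist X P Q = (1/2) * (\<Sum>x\<in>X. \<bar>P x - Q x\<bar>)"

definition unif_mass :: "'a set \<Rightarrow> 'a \<Rightarrow> real" where
  "unif_mass A x = (if x \<in> A then 1 / real (card A) else 0)"

text \<open>Subsets of the column index set {0..<m} (0-based version of {1..m/2}) of size s.\<close>
definition subsets_of_size :: "nat \<Rightarrow> nat \<Rightarrow> nat set set" where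
  "subsets_of_size m s = {E. E \<subseteq> {0..<m} \<and> card E = s}"

definition good :: "'f::field mat \<Rightarrow> nat set \<Rightarrow> bool" where
  "good H E \<longleftrightarrow>
     vec_space.rank (dim_row H) (submatrix H UNIV ({0..<dim_col H} - E)) = dim_row H"

definition good_sets :: "'f::field mat \<Rightarrow> nat \<Rightarrow> nat set set" where
  "good_sets H s = {E \<in> subsets_of_size (dim_col H) s. good H E}"

text \<open>The exponent gamma (the minimum over x > 0 is read as an infimum).\<close>
definition gamma_exp :: "real \<Rightarrow> real \<Rightarrow> real" where
  "gamma_exp R \<delta> =
     (INF x\<in>{0<..}. (1 - R + \<delta>) * log 3 ((1 + 3*x) / x) + (R - \<delta>) * log 3 (1 + x)) - 1 + R"

end

theory Submission
  imports Defs "HOL-Library.Cardinality"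
begin

text \<open>
  A set \<open>E\<close> fails to be good for \<open>H\<close> exactly when some nonzero \<open>y\<close> is orthogonal to all
  columns of \<open>H\<close> outside \<open>E\<close>, and then so are its two nonzero multiples.
  Let \<open>W(H)\<close> count the pairs \<open>(E, y)\<close> of this kind. The statistical distance between the two
  uniform distributions is at most the fraction of sets that are not good, so for every \<open>H\<close>
  counted on the left-hand side \<open>W(H)\<close> exceeds its mean by at least \<open>N / 3 ^ d\<close>,
  \<open>N\<close> being the number of sets. A fixed \<open>y \<noteq> 0\<close> annihilates \<open>t\<close> given columns of a uniform
  \<open>H\<close> with probability \<open>3 ^ -t\<close>, and two such events are independent unless the two
  vectors are proportional; this gives the first two moments of \<open>W\<close>, and Chebyshev's
  inequality bounds the number of such \<open>H\<close>. The remaining sum over pairs of sets is bounded by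
  the generating function \<open>(1 + 3 x) ^ t (1 + x) ^ s / x ^ t\<close>, whose optimisation over
  \<open>x > 0\<close> is the exponent \<open>\<gamma>\<close>.
\<close>

lemma sum_card_filter_swap:
  assumes "finite A" "finite B"
  shows "(\<Sum>a\<in>A. card {b\<in>B. P a b}) = (\<Sum>b\<in>B. card {a\<in>A. P a b})"
proof -
  have "card {b\<in>B. P a b} = (\<Sum>b\<in>B. of_bool (P a b))" for a
    using assms by (simp add: Collect_conj_eq Int_commute)
  moreover have "card {a\<in>A. P a b} = (\<Sum>a\<in>A. of_bool (P a b))" for b
    using assms by (simp add: Collect_conj_eq Int_commute)
  ultimately show ?thesis using sum.swap by simp
qed

lemma sum_of_bool_mem:
  fixes m :: nat
  assumes "A \<subseteq> {..<m}"
  shows "(\<Sum>j<m. of_bool (j \<in> A)) = (card A :: nat)"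
proof -
  have "(\<Sum>j<m. of_bool (j \<in> A)) = (of_nat (card ({..<m} \<inter> {j. j \<in> A})) :: nat)"
    by (rule sum_of_bool_eq) simp_all
  also have "{..<m} \<inter> {j. j \<in> A} = A" using assms by auto
  finally show ?thesis by simp
qed

section \<open>Vectors over a finite field\<close>

lemma card_carrier_vec: "card (carrier_vec n :: 'a::finite vec set) = CARD('a) ^ n"
proof -
  have "bij_betw (\<lambda>v. restrict (($) v) {..<n}) (carrier_vec n) (PiE {..<n} (\<lambda>_. UNIV :: 'a set))"
  proof (rule bij_betwI[where g = "vec n"])
    show "vec n (restrict (($) v) {..<n}) = v" if "v \<in> carrier_vec n" for v
      using that by (auto intro!: eq_vecI)
    show "restrict (($) (vec n f)) {..<n} = f" if "f \<in> PiE {..<n} (\<lambda>_. UNIV)" for f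
      using that by (auto simp: PiE_iff extensional_def)
  qed auto
  then show ?thesis by (simp add: bij_betw_same_card card_PiE)
qed

lemma finite_carrier_vec [simp]: "finite (carrier_vec n :: 'a::finite vec set)"
  by (rule card_ge_0_finite) (simp add: card_carrier_vec)

lemma card_UNIV_field_ge_2: "2 \<le> CARD('f::{field,finite})"
proof -
  have "card {0, 1 :: 'f} \<le> CARD('f)" by (rule card_mono) auto
  then show ?thesis by simp
qed

lemma card_nonzero_vecs: "card (carrier_vec r - {0\<^sub>v r} :: 'f::{zero,finite} vec set) = CARD('f) ^ r - 1"
  by (simp add: card_Diff_singleton card_carrier_vec)

lemma smult_vec_zero_left:
  fixes y :: "'a::mult_zero vec"
  shows "y \<in> carrier_vec n \<Longrightarrow> 0 \<cdot>\<^sub>v y = 0\<^sub>v n"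
  by (auto intro!: eq_vecI)

lemma inj_smult_vec:
  fixes y :: "'f::field vec"
  assumes "y \<in> carrier_vec n" "y \<noteq> 0\<^sub>v n"
  shows "inj (\<lambda>a. a \<cdot>\<^sub>v y)"
proof (rule injI)
  obtain i where i: "i < n" "y $ i \<noteq> 0"
    using assms by (metis carrier_vecD eq_vecI index_zero_vec)
  fix a b assume "a \<cdot>\<^sub>v y = b \<cdot>\<^sub>v y"
  then have "a * y $ i = b * y $ i" using i assms(1) by (metis carrier_vecD index_smult_vec(1))
  then show "a = b" using i by simp
qed

lemma scalar_prod_add_smult:
  fixes y :: "'a::comm_ring vec"
  shows "y \<in> carrier_vec n \<Longrightarrow> u \<in> carrier_vec n \<Longrightarrow> v \<in> carrier_vec n \<Longrightarrow>
    y \<bullet> (u + a \<cdot>\<^sub>v v) = y \<bullet> u + a * (y \<bullet> v)"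
  using scalar_prod_smult_distrib[of y n v a] by (simp add: scalar_prod_add_distrib)

definition vec_subspace :: "nat \<Rightarrow> 'f::field vec set \<Rightarrow> bool" where
  "vec_subspace n W \<longleftrightarrow>
     W \<subseteq> carrier_vec n \<and> 0\<^sub>v n \<in> W \<and> (\<forall>u\<in>W. \<forall>v\<in>W. \<forall>a. u + a \<cdot>\<^sub>v v \<in> W)"

lemma vec_subspace_carrier_vec: "vec_subspace n (carrier_vec n)"
  by (auto simp: vec_subspace_def)

lemma vec_subspace_kernel:
  assumes "vec_subspace n W" "y \<in> carrier_vec n"
  shows "vec_subspace n {w\<in>W. y \<bullet> w = 0}"
proof -
  have "W \<subseteq> carrier_vec n" using assms(1) by (simp add: vec_subspace_def)
  then show ?thesis using assms by (auto simp: vec_subspace_def scalar_prod_add_smult subsetD)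
qed

lemma card_vec_subspace_split:
  fixes W :: "'f::{field,finite} vec set"
  assumes W: "vec_subspace n W" and y: "y \<in> carrier_vec n"
    and c: "c \<in> W" "y \<bullet> c \<noteq> 0"
  shows "card W = card {w\<in>W. y \<bullet> w = 0} * CARD('f)"
proof -
  have WC: "W \<subseteq> carrier_vec n" and cl: "\<And>u v a. u \<in> W \<Longrightarrow> v \<in> W \<Longrightarrow> u + a \<cdot>\<^sub>v v \<in> W"
    using W by (auto simp: vec_subspace_def)
  define e where "e = (1 / (y \<bullet> c)) \<cdot>\<^sub>v c"
  have "0\<^sub>v n + (1 / (y \<bullet> c)) \<cdot>\<^sub>v c \<in> W"
    using W c(1) by (simp add: vec_subspace_def)
  then have eW: "e \<in> W" and en: "e \<in> carrier_vec n"
    using c(1) WC by (auto simp: e_def)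
  have ye: "y \<bullet> e = 1"
    using c WC y by (auto simp: e_def scalar_prod_smult_distrib)
  have lin: "y \<bullet> (w + a \<cdot>\<^sub>v e) = y \<bullet> w + a" if "w \<in> carrier_vec n" for w a
    using that y en ye by (simp add: scalar_prod_add_smult)
  have "bij_betw (\<lambda>(w, a). w + a \<cdot>\<^sub>v e) ({w\<in>W. y \<bullet> w = 0} \<times> UNIV) W"
  proof (rule bij_betwI[where g = "\<lambda>v. (v + (- (y \<bullet> v)) \<cdot>\<^sub>v e, y \<bullet> v)"])
    show "(\<lambda>(w, a). w + a \<cdot>\<^sub>v e) \<in> {w\<in>W. y \<bullet> w = 0} \<times> UNIV \<rightarrow> W"
      using cl eW by auto
    show "(\<lambda>v. (v + (- (y \<bullet> v)) \<cdot>\<^sub>v e, y \<bullet> v)) \<in> W \<rightarrow> {w\<in>W. y \<bullet> w = 0} \<times> UNIV"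
      using cl eW WC lin by auto
    show "(\<lambda>v. (v + (- (y \<bullet> v)) \<cdot>\<^sub>v e, y \<bullet> v)) ((\<lambda>(w, a). w + a \<cdot>\<^sub>v e) p) = p"
      if "p \<in> {w\<in>W. y \<bullet> w = 0} \<times> UNIV" for p
      using that WC lin en by (auto intro!: eq_vecI)
    show "(\<lambda>(w, a). w + a \<cdot>\<^sub>v e) ((\<lambda>v. (v + (- (y \<bullet> v)) \<cdot>\<^sub>v e, y \<bullet> v)) v) = v"
      if "v \<in> W" for v
      using that WC en by (auto intro!: eq_vecI)
  qed
  then show ?thesis by (simp add: bij_betw_same_card[symmetric] card_cartesian_product)
qed

lemma card_hyperplane:
  fixes y :: "'f::{field,finite} vec"
  assumes y: "y \<in> carrier_vec n" "y \<noteq> 0\<^sub>v n"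
  shows "card {c\<in>carrier_vec n. y \<bullet> c = 0} * CARD('f) = CARD('f) ^ n"
proof -
  obtain i where i: "i < n" "y $ i \<noteq> 0"
    using y by (metis carrier_vecD eq_vecI index_zero_vec)
  have "card (carrier_vec n :: 'f vec set) = card {c\<in>carrier_vec n. y \<bullet> c = 0} * CARD('f)"
    by (rule card_vec_subspace_split[OF vec_subspace_carrier_vec y(1), of "unit_vec n i"]) (use i in auto)
  then show ?thesis by (simp add: card_carrier_vec)
qed

text \<open>Double counting the pairs \<open>(y, w)\<close> with \<open>y \<bullet> w = 0\<close>, \<open>w \<in> W\<close>, by \<open>y\<close> and by \<open>w\<close>
  gives \<open>|W\<^sup>\<bottom>| * |W| = q ^ n\<close>; both counts are stated without subtraction.\<close>
lemma sum_card_subspace_kernels: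
  fixes W :: "'f::{field,finite} vec set"
  assumes W: "vec_subspace n W"
  defines "Z \<equiv> {y\<in>carrier_vec n. \<forall>w\<in>W. y \<bullet> w = 0}"
  shows "(\<Sum>y\<in>carrier_vec n. card {w\<in>W. y \<bullet> w = 0}) * CARD('f) + card Z * card W
    = card Z * card W * CARD('f) + CARD('f) ^ n * card W"
proof -
  let ?q = "CARD('f)" and ?C = "carrier_vec n :: 'f vec set"
  have ZC: "Z \<subseteq> ?C" by (auto simp: Z_def)
  have in_Z: "{w\<in>W. y \<bullet> w = 0} = W" if "y \<in> Z" for y
    using that by (auto simp: Z_def)
  have not_in_Z: "card {w\<in>W. y \<bullet> w = 0} * ?q = card W" if y: "y \<in> ?C - Z" for y
  proof -
    obtain c where "c \<in> W" "y \<bullet> c \<noteq> 0" using y by (auto simp: Z_def)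
    then show ?thesis using card_vec_subspace_split[OF W, of y] y by simp
  qed
  have "(\<Sum>y\<in>?C. card {w\<in>W. y \<bullet> w = 0}) * ?q
      = (\<Sum>y\<in>?C - Z. card {w\<in>W. y \<bullet> w = 0} * ?q) + (\<Sum>y\<in>Z. card {w\<in>W. y \<bullet> w = 0} * ?q)"
    by (simp add: sum.subset_diff[OF ZC finite_carrier_vec] distrib_right sum_distrib_right)
  also have "\<dots> = card (?C - Z) * card W + card Z * card W * ?q"
    by (simp add: in_Z not_in_Z)
  moreover have "card (?C - Z) + card Z = ?q ^ n"
    using card_Diff_subset[OF finite_subset[OF ZC finite_carrier_vec] ZC] card_mono[OF finite_carrier_vec ZC]
    by (simp add: card_carrier_vec)
  then have "card (?C - Z) * card W + card Z * card W = ?q ^ n * card W"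
    by (metis add_mult_distrib)
  ultimately show ?thesis by simp
qed

lemma sum_card_hyperplanes:
  fixes W :: "'f::{field,finite} vec set"
  assumes W: "vec_subspace n W"
  shows "(\<Sum>w\<in>W. card {y\<in>carrier_vec n. y \<bullet> w = 0}) * CARD('f) + CARD('f) ^ n
    = CARD('f) ^ n * CARD('f) + CARD('f) ^ n * card W"
proof -
  let ?q = "CARD('f)" and ?C = "carrier_vec n :: 'f vec set"
  have WC: "W \<subseteq> ?C" and W0: "0\<^sub>v n \<in> W" using W by (auto simp: vec_subspace_def)
  have finW: "finite W" using finite_subset[OF WC finite_carrier_vec] .
  have nonzero: "card {y\<in>?C. y \<bullet> w = 0} * ?q = ?q ^ n" if "w \<in> W - {0\<^sub>v n}" for w
  proof -
    have "{y\<in>?C. y \<bullet> w = 0} = {y\<in>?C. w \<bullet> y = 0}"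
      using that WC by (intro Collect_cong) (metis DiffD1 comm_scalar_prod subsetD)
    then show ?thesis using card_hyperplane[of w n] that WC by auto
  qed
  have "{y\<in>?C. y \<bullet> 0\<^sub>v n = 0} = ?C" by auto
  then have "(\<Sum>w\<in>W. card {y\<in>?C. y \<bullet> w = 0}) * ?q
      = ?q ^ n * ?q + (\<Sum>w\<in>W - {0\<^sub>v n}. card {y\<in>?C. y \<bullet> w = 0} * ?q)"
    by (simp add: sum.remove[OF finW W0] card_carrier_vec distrib_right sum_distrib_right)
  also have "\<dots> = ?q ^ n * ?q + card (W - {0\<^sub>v n}) * ?q ^ n"
    by (simp add: nonzero)
  finally show ?thesis using card.remove[OF finW W0] by (simp add: algebra_simps)
qed

lemma card_annihilator:
  fixes W :: "'f::{field,finite} vec set"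
  assumes W: "vec_subspace n W"
  shows "card {y\<in>carrier_vec n. \<forall>w\<in>W. y \<bullet> w = 0} * card W = CARD('f) ^ n"
proof -
  let ?q = "CARD('f)" and ?zw = "card {y\<in>carrier_vec n. \<forall>w\<in>W. y \<bullet> w = 0} * card W"
  have "finite W"
    using W finite_subset[OF _ finite_carrier_vec] by (auto simp: vec_subspace_def)
  then have "?zw + ?q ^ n * ?q = ?zw * ?q + ?q ^ n"
    using sum_card_subspace_kernels[OF W, unfolded sum_card_filter_swap[OF finite_carrier_vec \<open>finite W\<close>]]
      sum_card_hyperplanes[OF W]
    by linarith
  then have "int ?zw + int (?q ^ n) * int ?q = int ?zw * int ?q + int (?q ^ n)"
    by (simp only: of_nat_add[symmetric] of_nat_mult[symmetric] of_nat_eq_iff)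
  then have "int ?zw * (int ?q - 1) = int (?q ^ n) * (int ?q - 1)"
    by (simp add: right_diff_distrib)
  moreover have "int ?q - 1 \<noteq> 0" using card_UNIV_field_ge_2[where 'f='f] by simp
  ultimately have "int ?zw = int (?q ^ n)" using mult_right_cancel by blast
  then show ?thesis by (simp only: of_nat_eq_iff)
qed

lemma proper_vec_subspace_annihilator:
  fixes W :: "'f::{field,finite} vec set"
  assumes W: "vec_subspace n W" and proper: "W \<noteq> carrier_vec n"
  obtains y where "y \<in> carrier_vec n" "y \<noteq> 0\<^sub>v n" "\<forall>w\<in>W. y \<bullet> w = 0"
proof -
  define Z where "Z = {y\<in>carrier_vec n. \<forall>w\<in>W. y \<bullet> w = 0}"
  have "card W < card (carrier_vec n :: 'f vec set)"
    using W proper by (intro psubset_card_mono) (auto simp: vec_subspace_def)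
  moreover have "card Z * card W = card (carrier_vec n :: 'f vec set)"
    using card_annihilator[OF W] by (simp add: Z_def card_carrier_vec)
  ultimately have "\<not> card Z \<le> 1"
    using mult_le_mono1[of "card Z" 1 "card W"] by linarith
  then have "\<not> Z \<subseteq> {0\<^sub>v n}"
    using card_mono[of "{0\<^sub>v n}" Z] by auto
  then show ?thesis using that by (auto simp: Z_def)
qed

lemma card_two_hyperplanes:
  fixes y y' :: "'f::{field,finite} vec"
  assumes y: "y \<in> carrier_vec n" "y \<noteq> 0\<^sub>v n"
    and y': "y' \<in> carrier_vec n" "y' \<notin> range (\<lambda>a. a \<cdot>\<^sub>v y)"
  shows "card {c\<in>carrier_vec n. y \<bullet> c = 0 \<and> y' \<bullet> c = 0} * CARD('f) ^ 2 = CARD('f) ^ n"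
proof -
  let ?q = "CARD('f)"
  define K where "K = {c\<in>carrier_vec n. y \<bullet> c = 0}"
  have K: "vec_subspace n K"
    unfolding K_def by (rule vec_subspace_kernel[OF vec_subspace_carrier_vec y(1)])
  have cardK: "card K * ?q = ?q ^ n" unfolding K_def by (rule card_hyperplane[OF y])
  have "\<exists>c\<in>K. y' \<bullet> c \<noteq> 0"
    \<comment> \<open>the annihilator of \<open>K\<close> has \<open>q\<close> elements, hence consists of the multiples of \<open>y\<close>\<close>
  proof (rule ccontr)
    define Ann where "Ann = {z\<in>carrier_vec n. \<forall>c\<in>K. z \<bullet> c = 0}"
    assume "\<not> (\<exists>c\<in>K. y' \<bullet> c \<noteq> 0)"
    then have "y' \<in> Ann" using y' by (auto simp: Ann_def)
    have multiples: "range (\<lambda>a. a \<cdot>\<^sub>v y) \<subseteq> Ann"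
      using y by (auto simp: Ann_def K_def scalar_prod_smult_left)
    have "card Ann * card K = card K * ?q"
      using card_annihilator[OF K] cardK by (simp add: Ann_def)
    moreover have "card K \<noteq> 0"
    proof
      assume "card K = 0"
      then show False using cardK card_UNIV_field_ge_2[where 'f='f] by simp
    qed
    ultimately have "card Ann = card (range (\<lambda>a. a \<cdot>\<^sub>v y))"
      by (simp add: card_image[OF inj_smult_vec[OF y]])
    then have "Ann = range (\<lambda>a. a \<cdot>\<^sub>v y)"
      using multiples by (intro card_subset_eq[symmetric]) (auto simp: Ann_def)
    then show False using \<open>y' \<in> Ann\<close> y'(2) by simp
  qed
  then obtain c where "c \<in> K" "y' \<bullet> c \<noteq> 0" by blast
  then have "card K = card {c\<in>K. y' \<bullet> c = 0} * ?q"
    by (rule card_vec_subspace_split[OF K y'(1)])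
  moreover have "{c\<in>K. y' \<bullet> c = 0} = {c\<in>carrier_vec n. y \<bullet> c = 0 \<and> y' \<bullet> c = 0}"
    by (auto simp: K_def)
  ultimately show ?thesis using cardK by (simp add: power2_eq_square mult.assoc)
qed

lemma card_dependent_pairs_le:
  fixes r :: nat
  defines "Y \<equiv> carrier_vec r - {0\<^sub>v r} :: 'f::{field,finite} vec set"
  shows "real (card {p\<in>Y \<times> Y. snd p \<in> range (\<lambda>a. a \<cdot>\<^sub>v fst p)})
    \<le> (real CARD('f) ^ r - 1) * (real CARD('f) - 1)"
proof -
  have "card {y'\<in>Y. y' \<in> range (\<lambda>a. a \<cdot>\<^sub>v y)} \<le> CARD('f) - 1" if "y \<in> Y" for y
  proof -
    have "{y'\<in>Y. y' \<in> range (\<lambda>a. a \<cdot>\<^sub>v y)} \<subseteq> (\<lambda>a. a \<cdot>\<^sub>v y) ` (UNIV - {0})"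
      using that by (auto simp: Y_def smult_vec_zero_left)
    then have "card {y'\<in>Y. y' \<in> range (\<lambda>a. a \<cdot>\<^sub>v y)} \<le> card ((\<lambda>a. a \<cdot>\<^sub>v y) ` (UNIV - {0}))"
      by (rule card_mono[rotated]) simp
    also have "\<dots> \<le> card (UNIV - {0 :: 'f})" by (rule card_image_le) simp
    finally show ?thesis by (simp add: card_Diff_singleton)
  qed
  then have "(\<Sum>y\<in>Y. card {y'\<in>Y. y' \<in> range (\<lambda>a. a \<cdot>\<^sub>v y)}) \<le> card Y * (CARD('f) - 1)"
    using sum_mono[of Y _ "\<lambda>_. CARD('f) - 1"] by simp
  moreover have "{p\<in>Y \<times> Y. snd p \<in> range (\<lambda>a. a \<cdot>\<^sub>v fst p)} = (SIGMA y:Y. {y'\<in>Y. y' \<in> range (\<lambda>a. a \<cdot>\<^sub>v y)})"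
    by auto
  ultimately have "card {p\<in>Y \<times> Y. snd p \<in> range (\<lambda>a. a \<cdot>\<^sub>v fst p)} \<le> (CARD('f) ^ r - 1) * (CARD('f) - 1)"
    by (simp add: Y_def card_nonzero_vecs)
  then have "real (card {p\<in>Y \<times> Y. snd p \<in> range (\<lambda>a. a \<cdot>\<^sub>v fst p)})
      \<le> real ((CARD('f) ^ r - 1) * (CARD('f) - 1))"
    by (simp only: of_nat_le_iff)
  also have "\<dots> = (real CARD('f) ^ r - 1) * (real CARD('f) - 1)"
    using card_UNIV_field_ge_2[where 'f = 'f] one_le_power[of "CARD('f)" r] by (simp add: of_nat_diff)
  finally show ?thesis .
qed

lemma (in vec_space) vec_subspace_span:
  assumes "S \<subseteq> carrier_vec n"
  shows "vec_subspace n (span S)"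
proof -
  have sub: "submodule class_ring (span S) V" using span_is_submodule[OF assms] by simp
  have "u + a \<cdot>\<^sub>v v \<in> span S" if "u \<in> span S" "v \<in> span S" for u v a
    using submodule.m_closed[OF sub that(1) submodule.smult_closed[OF sub _ that(2)]] by simp
  moreover have "span S \<subseteq> carrier_vec n" using submodule.subset[OF sub] by simp
  moreover have "0\<^sub>v n \<in> span S" using submodule.zero_closed[OF sub] by simp
  ultimately show ?thesis by (simp add: vec_subspace_def)
qed

lemma (in vec_space) rank_eq_if_cols_span:
  assumes "span (set (cols A)) = carrier_vec n"
  shows "rank A = n"
proof -
  have "rank A = vectorspace.dim class_ring (V\<lparr>carrier := carrier_vec n\<rparr>)"
    unfolding rank_def assms by simp
  also have "V\<lparr>carrier := carrier_vec n\<rparr> = V" by (simp add: module_vec_def)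
  finally show ?thesis using dim_is_n by simp
qed

section \<open>Matrices counted column by column\<close>

lemma card_carrier_mat_cols:
  fixes P :: "nat \<Rightarrow> 'f::finite vec \<Rightarrow> bool"
  shows "card {H\<in>carrier_mat r m. \<forall>j<m. P j (col H j)} = (\<Prod>j<m. card {c\<in>carrier_vec r. P j c})"
proof -
  let ?S = "{H\<in>carrier_mat r m. \<forall>j<m. P j (col H j)}"
  let ?T = "PiE {..<m} (\<lambda>j. {c\<in>carrier_vec r. P j c})"
  have "bij_betw (\<lambda>H. restrict (col H) {..<m}) ?S ?T"
  proof (rule bij_betwI[where g = "\<lambda>C. mat r m (\<lambda>(i, j). C j $ i)"])
    show "(\<lambda>H. restrict (col H) {..<m}) \<in> ?S \<rightarrow> ?T" by auto
    show "(\<lambda>C. mat r m (\<lambda>(i, j). C j $ i)) \<in> ?T \<rightarrow> ?S"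
    proof
      fix C assume C: "C \<in> ?T"
      have "col (mat r m (\<lambda>(i, j). C j $ i)) j = C j" if "j < m" for j
      proof -
        have "C j \<in> carrier_vec r" using C that by (auto simp: PiE_iff)
        then show ?thesis using that by (auto intro!: eq_vecI)
      qed
      then show "mat r m (\<lambda>(i, j). C j $ i) \<in> ?S" using C by (auto simp: PiE_iff)
    qed
    show "mat r m (\<lambda>(i, j). restrict (col H) {..<m} j $ i) = H" if "H \<in> ?S" for H
      using that by (auto intro!: eq_matI)
    show "restrict (col (mat r m (\<lambda>(i, j). C j $ i))) {..<m} = C" if C: "C \<in> ?T" for C
    proof
      fix j
      show "restrict (col (mat r m (\<lambda>(i, j). C j $ i))) {..<m} j = C j"
      proof (cases "j < m")
        case True
        then have "C j \<in> carrier_vec r" using C by (auto simp: PiE_iff)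
        then show ?thesis using True by (auto intro!: eq_vecI)
      qed (use C in \<open>auto simp: PiE_iff extensional_def\<close>)
    qed
  qed
  then show ?thesis by (simp add: bij_betw_same_card card_PiE)
qed

lemma card_carrier_mat_col_constraints:
  fixes P :: "nat \<Rightarrow> 'f::finite vec \<Rightarrow> bool"
  assumes "\<And>j. j < m \<Longrightarrow> card {c\<in>carrier_vec r. P j c} * CARD('f) ^ e j = CARD('f) ^ r"
  shows "card {H\<in>carrier_mat r m. \<forall>j<m. P j (col H j)} * CARD('f) ^ (\<Sum>j<m. e j) = CARD('f) ^ (r * m)"
proof -
  have "card {H\<in>carrier_mat r m. \<forall>j<m. P j (col H j)} * CARD('f) ^ (\<Sum>j<m. e j)
      = (\<Prod>j<m. card {c\<in>carrier_vec r. P j c} * CARD('f) ^ e j)"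
    by (simp add: card_carrier_mat_cols power_sum prod.distrib)
  also have "\<dots> = (\<Prod>j<m. CARD('f) ^ r)" using assms by simp
  finally show ?thesis by (simp add: power_mult)
qed

lemma card_carrier_mat: "card (carrier_mat r m :: 'f::finite mat set) = CARD('f) ^ (r * m)"
  using card_carrier_mat_col_constraints[where P = "\<lambda>_ (_ :: 'f vec). True" and e = "\<lambda>_. 0" and m = m and r = r]
  by (simp add: card_carrier_vec)

lemma finite_carrier_mat: "finite (carrier_mat r m :: 'f::finite mat set)"
  by (rule card_ge_0_finite) (simp add: card_carrier_mat)

lemma card_mat_annihilated:
  fixes y :: "'f::{field,finite} vec"
  assumes y: "y \<in> carrier_vec r" "y \<noteq> 0\<^sub>v r" and A: "A \<subseteq> {..<m}"
  shows "card {H\<in>carrier_mat r m. \<forall>j\<in>A. y \<bullet> col H j = 0} * CARD('f) ^ card A = CARD('f) ^ (r * m)"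
proof -
  have "{H\<in>carrier_mat r m. \<forall>j\<in>A. y \<bullet> col H j = 0}
      = {H\<in>carrier_mat r m. \<forall>j<m. j \<in> A \<longrightarrow> y \<bullet> col H j = 0}"
    using A by auto
  moreover have "card {H\<in>carrier_mat r m. \<forall>j<m. j \<in> A \<longrightarrow> y \<bullet> col H j = 0}
      * CARD('f) ^ (\<Sum>j<m. of_bool (j \<in> A)) = CARD('f) ^ (r * m)"
    by (rule card_carrier_mat_col_constraints) (use card_hyperplane[OF y] in \<open>simp add: card_carrier_vec\<close>)
  ultimately show ?thesis by (simp add: sum_of_bool_mem[OF A])
qed

lemma card_mat_annihilated_pair:
  fixes y y' :: "'f::{field,finite} vec"
  assumes y: "y \<in> carrier_vec r" "y \<noteq> 0\<^sub>v r"
    and y': "y' \<in> carrier_vec r" "y' \<notin> range (\<lambda>a. a \<cdot>\<^sub>v y)"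
    and A: "A \<subseteq> {..<m}" and B: "B \<subseteq> {..<m}"
  shows "card {H\<in>carrier_mat r m. (\<forall>j\<in>A. y \<bullet> col H j = 0) \<and> (\<forall>j\<in>B. y' \<bullet> col H j = 0)}
      * CARD('f) ^ (card A + card B) = CARD('f) ^ (r * m)"
proof -
  let ?P = "\<lambda>j c. (j \<in> A \<longrightarrow> y \<bullet> c = 0) \<and> (j \<in> B \<longrightarrow> y' \<bullet> c = 0)"
  have y'0: "y' \<noteq> 0\<^sub>v r"
  proof
    assume "y' = 0\<^sub>v r"
    then have "y' = 0 \<cdot>\<^sub>v y" using y(1) by (simp add: smult_vec_zero_left)
    then show False using y'(2) by auto
  qed
  have "{H\<in>carrier_mat r m. (\<forall>j\<in>A. y \<bullet> col H j = 0) \<and> (\<forall>j\<in>B. y' \<bullet> col H j = 0)}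
      = {H\<in>carrier_mat r m. \<forall>j<m. ?P j (col H j)}"
    using A B by auto
  moreover have "card {H\<in>carrier_mat r m. \<forall>j<m. ?P j (col H j)}
      * CARD('f) ^ (\<Sum>j<m. of_bool (j \<in> A) + of_bool (j \<in> B)) = CARD('f) ^ (r * m)"
    by (rule card_carrier_mat_col_constraints)
      (use card_hyperplane[OF y] card_hyperplane[OF y'(1) y'0] card_two_hyperplanes[OF y y'] in
        \<open>auto simp: card_carrier_vec power2_eq_square mult.assoc\<close>)
  ultimately show ?thesis by (simp add: sum.distrib sum_of_bool_mem[OF A] sum_of_bool_mem[OF B])
qed

lemma card_mat_annihilated_pair_le:
  fixes y y' :: "'f::{field,finite} vec"
  defines "q \<equiv> real CARD('f)"
  assumes y: "y \<in> carrier_vec r - {0\<^sub>v r}" and y': "y' \<in> carrier_vec r - {0\<^sub>v r}"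
    and J: "J \<subseteq> {..<m}" and J': "J' \<subseteq> {..<m}"
  shows "real (card {H\<in>carrier_mat r m. (\<forall>j\<in>J. y \<bullet> col H j = 0) \<and> (\<forall>j\<in>J'. y' \<bullet> col H j = 0)})
    \<le> q ^ (r * m) / q ^ (card J + card J')
      + (if y' \<in> range (\<lambda>a. a \<cdot>\<^sub>v y) then q ^ (r * m) / q ^ card (J \<union> J') else 0)"
proof (cases "y' \<in> range (\<lambda>a. a \<cdot>\<^sub>v y)")
  case True
  then obtain a where a: "y' = a \<cdot>\<^sub>v y" by blast
  then have "a \<noteq> 0" using y y' by (auto simp: smult_vec_zero_left)
  then have "{H\<in>carrier_mat r m. (\<forall>j\<in>J. y \<bullet> col H j = 0) \<and> (\<forall>j\<in>J'. y' \<bullet> col H j = 0)}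
      = {H\<in>carrier_mat r m. \<forall>j\<in>J \<union> J'. y \<bullet> col H j = 0}"
    using a y by (auto simp: scalar_prod_smult_left)
  moreover have "card {H\<in>carrier_mat r m. \<forall>j\<in>J \<union> J'. y \<bullet> col H j = 0} * CARD('f) ^ card (J \<union> J')
      = CARD('f) ^ (r * m)"
    by (rule card_mat_annihilated) (use y J J' in auto)
  then have "real (card {H\<in>carrier_mat r m. \<forall>j\<in>J \<union> J'. y \<bullet> col H j = 0}) * q ^ card (J \<union> J')
      = q ^ (r * m)"
    unfolding q_def by (simp flip: of_nat_mult of_nat_power)
  ultimately have "real (card {H\<in>carrier_mat r m. (\<forall>j\<in>J. y \<bullet> col H j = 0) \<and> (\<forall>j\<in>J'. y' \<bullet> col H j = 0)})
      = q ^ (r * m) / q ^ card (J \<union> J')"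
    by (simp add: q_def eq_divide_eq)
  then show ?thesis using True by (simp add: q_def)
next
  case False
  have "card {H\<in>carrier_mat r m. (\<forall>j\<in>J. y \<bullet> col H j = 0) \<and> (\<forall>j\<in>J'. y' \<bullet> col H j = 0)}
      * CARD('f) ^ (card J + card J') = CARD('f) ^ (r * m)"
    by (rule card_mat_annihilated_pair) (use y y' J J' False in auto)
  then have "real (card {H\<in>carrier_mat r m. (\<forall>j\<in>J. y \<bullet> col H j = 0) \<and> (\<forall>j\<in>J'. y' \<bullet> col H j = 0)})
      * q ^ (card J + card J') = q ^ (r * m)"
    unfolding q_def by (simp flip: of_nat_mult of_nat_power)
  then have "real (card {H\<in>carrier_mat r m. (\<forall>j\<in>J. y \<bullet> col H j = 0) \<and> (\<forall>j\<in>J'. y' \<bullet> col H j = 0)})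
      = q ^ (r * m) / q ^ (card J + card J')"
    by (simp add: q_def eq_divide_eq)
  then show ?thesis using False by simp
qed

section \<open>Witnesses for sets that are not good\<close>

lemma col_in_cols_submatrix:
  assumes "j \<in> J" "j < dim_col H"
  shows "col H j \<in> set (cols (submatrix H UNIV J))"
proof -
  define l where "l = card {a\<in>J. a < j}"
  have "{a\<in>J. a < j} \<subset> {a. a < dim_col H \<and> a \<in> J}" using assms by auto
  then have l: "l < dim_col (submatrix H UNIV J)"
    unfolding l_def dim_submatrix by (simp add: psubset_card_mono)
  have "col (submatrix H UNIV J) l = col H j"
    using l assms submatrix_index_card[of _ H j UNIV J] by (auto simp: dim_submatrix l_def intro!: eq_vecI)
  then show ?thesis using l by (metis cols_length cols_nth nth_mem)
qed

definition col_annihilators :: "'f::field mat \<Rightarrow> nat set \<Rightarrow> 'f vec set" where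
  "col_annihilators H J =
     {y\<in>carrier_vec (dim_row H). y \<noteq> 0\<^sub>v (dim_row H) \<and> (\<forall>j\<in>J. y \<bullet> col H j = 0)}"

lemma col_annihilators_carrier_mat:
  "H \<in> carrier_mat r m \<Longrightarrow>
    col_annihilators H J = {y\<in>carrier_vec r - {0\<^sub>v r}. \<forall>j\<in>J. y \<bullet> col H j = 0}"
  by (auto simp: col_annihilators_def)

lemma col_annihilators_nonempty_if_not_good:
  fixes H :: "'f::{field,finite} mat"
  assumes H: "H \<in> carrier_mat r m" and E: "\<not> good H E"
  shows "col_annihilators H ({0..<m} - E) \<noteq> {}"
proof -
  interpret vs: vec_space "TYPE('f)" r .
  define M where "M = submatrix H UNIV ({0..<m} - E)"
  define W where "W = vs.span (set (cols M))"
  have "dim_row M = r" using H by (simp add: M_def dim_submatrix)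
  then have cols: "set (cols M) \<subseteq> carrier_vec r"
    using col_dim[of M] by (auto simp: cols_def)
  have W: "vec_subspace r W" unfolding W_def by (rule vs.vec_subspace_span[OF cols])
  moreover have "W \<noteq> carrier_vec r"
    using E H vs.rank_eq_if_cols_span[of M] by (auto simp: good_def M_def W_def)
  ultimately obtain y where y: "y \<in> carrier_vec r" "y \<noteq> 0\<^sub>v r" "\<forall>w\<in>W. y \<bullet> w = 0"
    by (rule proper_vec_subspace_annihilator)
  have "col H j \<in> W" if "j \<in> {0..<m} - E" for j
    using that H vs.in_own_span[OF cols] col_in_cols_submatrix[of j "{0..<m} - E" H]
    by (auto simp: W_def M_def)
  then have "y \<in> col_annihilators H ({0..<m} - E)"
    using y H by (auto simp: col_annihilators_def)
  then show ?thesis by blast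
qed

lemma card_col_annihilators_ge:
  fixes H :: "'f::{field,finite} mat"
  assumes "col_annihilators H J \<noteq> {}"
  shows "CARD('f) - 1 \<le> card (col_annihilators H J)"
proof -
  let ?n = "dim_row H"
  obtain y where y: "y \<in> col_annihilators H J" using assms by blast
  then have yC: "y \<in> carrier_vec ?n" "y \<noteq> 0\<^sub>v ?n" by (auto simp: col_annihilators_def)
  have "(\<lambda>a. a \<cdot>\<^sub>v y) ` (UNIV - {0}) \<subseteq> col_annihilators H J"
  proof
    fix v assume "v \<in> (\<lambda>a. a \<cdot>\<^sub>v y) ` (UNIV - {0})"
    then obtain a where a: "a \<noteq> 0" "v = a \<cdot>\<^sub>v y" by blast
    have "a \<cdot>\<^sub>v y \<noteq> 0 \<cdot>\<^sub>v y" using a(1) inj_smult_vec[OF yC] by (auto dest: injD)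
    moreover have "0 \<cdot>\<^sub>v y = 0\<^sub>v ?n" using yC(1) by (rule smult_vec_zero_left)
    ultimately show "v \<in> col_annihilators H J"
      using y a by (auto simp: col_annihilators_def scalar_prod_smult_left)
  qed
  moreover have "finite (col_annihilators H J)"
    by (rule finite_subset[OF _ finite_carrier_vec]) (auto simp: col_annihilators_def)
  ultimately have "card ((\<lambda>a. a \<cdot>\<^sub>v y) ` (UNIV - {0})) \<le> card (col_annihilators H J)"
    by (rule card_mono[rotated])
  moreover have "card ((\<lambda>a. a \<cdot>\<^sub>v y) ` (UNIV - {0 :: 'f})) = CARD('f) - 1"
    using inj_smult_vec[OF yC] by (simp add: card_image inj_on_subset card_Diff_singleton)
  ultimately show ?thesis by simp
qed

lemma finite_subsets_of_size: "finite (subsets_of_size m s)"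
  by (rule finite_subset[of _ "Pow {0..<m}"]) (auto simp: subsets_of_size_def)

lemma card_subsets_of_size: "card (subsets_of_size m s) = m choose s"
  using n_subsets[of "{0..<m}" s] by (simp add: subsets_of_size_def)

lemma complement_subsets_of_size:
  assumes "E \<in> subsets_of_size m s"
  shows "{0..<m} - E \<subseteq> {..<m}" "card ({0..<m} - E) = m - s"
  using assms card_Diff_subset[of E "{0..<m}"] finite_subset[of E "{0..<m}"]
  by (auto simp: subsets_of_size_def)

text \<open>The random variable of the second-moment argument.\<close>
definition witness_count :: "'f::field mat \<Rightarrow> nat \<Rightarrow> nat" where
  "witness_count H s =
     (\<Sum>E\<in>subsets_of_size (dim_col H) s. card (col_annihilators H ({0..<dim_col H} - E)))"

lemma witness_count_ge:
  fixes H :: "'f::{field,finite} mat"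
  assumes H: "H \<in> carrier_mat r m"
  shows "(CARD('f) - 1) * card (subsets_of_size m s - good_sets H s) \<le> witness_count H s"
proof -
  let ?S = "subsets_of_size m s"
  have "(CARD('f) - 1) * card (?S - good_sets H s)
      = (\<Sum>E\<in>?S - good_sets H s. CARD('f) - 1)" by simp
  also have "\<dots> \<le> (\<Sum>E\<in>?S - good_sets H s. card (col_annihilators H ({0..<m} - E)))"
    using H col_annihilators_nonempty_if_not_good[OF H]
    by (intro sum_mono card_col_annihilators_ge) (auto simp: good_sets_def)
  also have "\<dots> \<le> witness_count H s"
    using H by (auto simp: witness_count_def intro!: sum_mono2 finite_subsets_of_size)
  finally show ?thesis .
qed

lemma stat_dist_unif_subset:
  assumes "finite S" "G \<subseteq> S" "S \<noteq> {}"
  shows "stat_dist S (unif_mass S) (unif_mass G) \<le> real (card (S - G)) / real (card S)"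
proof (cases "G = {}")
  case True
  then show ?thesis using assms by (simp add: stat_dist_def unif_mass_def card_gt_0_iff)
next
  case False
  have S: "card S > 0" and G: "card G > 0" and GS: "card G \<le> card S"
    using assms False by (auto simp: card_gt_0_iff card_mono finite_subset)
  have "(\<Sum>x\<in>S. \<bar>unif_mass S x - unif_mass G x\<bar>)
      = (\<Sum>x\<in>S - G. \<bar>unif_mass S x - unif_mass G x\<bar>) + (\<Sum>x\<in>G. \<bar>unif_mass S x - unif_mass G x\<bar>)"
    by (rule sum.subset_diff[OF assms(2,1)])
  also have "(\<Sum>x\<in>S - G. \<bar>unif_mass S x - unif_mass G x\<bar>) = (\<Sum>x\<in>S - G. 1 / real (card S))"
    by (rule sum.cong) (auto simp: unif_mass_def)
  also have "(\<Sum>x\<in>G. \<bar>unif_mass S x - unif_mass G x\<bar>) = (\<Sum>x\<in>G. 1 / real (card G) - 1 / real (card S))"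
    using assms(2) G GS by (intro sum.cong) (auto simp: unif_mass_def frac_le)
  also have "(\<Sum>x\<in>S - G. 1 / real (card S)) + (\<Sum>x\<in>G. 1 / real (card G) - 1 / real (card S))
      = 2 * (real (card (S - G)) / real (card S))"
  proof -
    have "real (card (S - G)) = real (card S) - real (card G)"
      using card_Diff_subset[OF finite_subset[OF assms(2,1)] assms(2)] GS by simp
    then have "1 - real (card G) / real (card S) = real (card (S - G)) / real (card S)"
      using S by (simp add: diff_divide_distrib)
    moreover have "(\<Sum>x\<in>G. 1 / real (card G) - 1 / real (card S)) = 1 - real (card G) / real (card S)"
      using G by (simp add: right_diff_distrib)
    ultimately show ?thesis by simp
  qed
  finally show ?thesis by (simp add: stat_dist_def)
qed

section \<open>Moments of the witness count\<close>

lemma sum_card_col_annihilators: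
  fixes J :: "nat set"
  assumes J: "J \<subseteq> {..<m}"
  shows "(\<Sum>H\<in>(carrier_mat r m :: 'f::{field,finite} mat set). card (col_annihilators H J)) * CARD('f) ^ card J
    = (CARD('f) ^ r - 1) * CARD('f) ^ (r * m)"
proof -
  let ?Y = "carrier_vec r - {0\<^sub>v r} :: 'f vec set"
  have "(\<Sum>H\<in>(carrier_mat r m :: 'f mat set). card (col_annihilators H J))
      = (\<Sum>H\<in>carrier_mat r m. card {y\<in>?Y. \<forall>j\<in>J. y \<bullet> col H j = 0})"
    by (intro sum.cong) (simp_all add: col_annihilators_carrier_mat)
  also have "\<dots> = (\<Sum>y\<in>?Y. card {H\<in>carrier_mat r m. \<forall>j\<in>J. y \<bullet> col H j = 0})"
    by (rule sum_card_filter_swap) (simp_all add: finite_carrier_mat)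
  finally have "(\<Sum>H\<in>(carrier_mat r m :: 'f mat set). card (col_annihilators H J)) * CARD('f) ^ card J
      = (\<Sum>y\<in>?Y. card {H\<in>carrier_mat r m. \<forall>j\<in>J. y \<bullet> col H j = 0} * CARD('f) ^ card J)"
    by (simp add: sum_distrib_right)
  also have "\<dots> = (\<Sum>y\<in>?Y. CARD('f) ^ (r * m))"
    by (rule sum.cong[OF refl], rule card_mat_annihilated) (use J in auto)
  finally show ?thesis by (simp add: card_nonzero_vecs)
qed

lemma sum_card_col_annihilators_mult_eq:
  fixes r m :: nat and J J' :: "nat set"
  defines "Y \<equiv> carrier_vec r - {0\<^sub>v r} :: 'f::{field,finite} vec set"
  shows "(\<Sum>H\<in>(carrier_mat r m :: 'f mat set). card (col_annihilators H J) * card (col_annihilators H J'))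
    = (\<Sum>p\<in>Y \<times> Y. card {H\<in>carrier_mat r m. (\<forall>j\<in>J. fst p \<bullet> col H j = 0) \<and> (\<forall>j\<in>J'. snd p \<bullet> col H j = 0)})"
proof -
  let ?P = "\<lambda>H p. (\<forall>j\<in>J. fst p \<bullet> col H j = 0) \<and> (\<forall>j\<in>J'. snd p \<bullet> col H j = 0)"
  have "card (col_annihilators H J) * card (col_annihilators H J') = card {p\<in>Y \<times> Y. ?P H p}"
    if "H \<in> carrier_mat r m" for H
  proof -
    have "col_annihilators H J \<times> col_annihilators H J' = {p\<in>Y \<times> Y. ?P H p}"
      using that by (auto simp: col_annihilators_carrier_mat Y_def)
    then show ?thesis by (simp only: card_cartesian_product[symmetric])
  qed
  then have "(\<Sum>H\<in>(carrier_mat r m :: 'f mat set). card (col_annihilators H J) * card (col_annihilators H J'))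
      = (\<Sum>H\<in>carrier_mat r m. card {p\<in>Y \<times> Y. ?P H p})"
    by (rule sum.cong[OF refl])
  also have "\<dots> = (\<Sum>p\<in>Y \<times> Y. card {H\<in>carrier_mat r m. ?P H p})"
    by (rule sum_card_filter_swap) (simp_all add: finite_carrier_mat Y_def)
  finally show ?thesis .
qed

lemma sum_card_col_annihilators_mult:
  fixes J J' :: "nat set"
  defines "q \<equiv> real CARD('f::{field,finite})"
  assumes J: "J \<subseteq> {..<m}" and J': "J' \<subseteq> {..<m}"
  shows "(\<Sum>H\<in>(carrier_mat r m :: 'f mat set). real (card (col_annihilators H J) * card (col_annihilators H J')))
    \<le> (q ^ r - 1)\<^sup>2 * (q ^ (r * m) / q ^ (card J + card J'))
      + (q ^ r - 1) * (q - 1) * (q ^ (r * m) / q ^ card (J \<union> J'))"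
proof -
  let ?Y = "carrier_vec r - {0\<^sub>v r} :: 'f vec set" and ?\<Omega> = "carrier_mat r m :: 'f mat set"
  let ?P = "\<lambda>H p. (\<forall>j\<in>J. fst p \<bullet> col H j = 0) \<and> (\<forall>j\<in>J'. snd p \<bullet> col H j = 0)"
  let ?dep = "\<lambda>p :: 'f vec \<times> 'f vec. snd p \<in> range (\<lambda>a. a \<cdot>\<^sub>v fst p)"
  define c1 where "c1 = q ^ (r * m) / q ^ (card J + card J')"
  define c2 where "c2 = q ^ (r * m) / q ^ card (J \<union> J')"
  have "(\<Sum>H\<in>?\<Omega>. card (col_annihilators H J) * card (col_annihilators H J'))
      = (\<Sum>p\<in>?Y \<times> ?Y. card {H\<in>?\<Omega>. ?P H p})"
    by (rule sum_card_col_annihilators_mult_eq)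
  then have "(\<Sum>H\<in>?\<Omega>. real (card (col_annihilators H J) * card (col_annihilators H J')))
      = (\<Sum>p\<in>?Y \<times> ?Y. real (card {H\<in>?\<Omega>. ?P H p}))"
    by (simp only: of_nat_sum[symmetric])
  also have "\<dots> \<le> (\<Sum>p\<in>?Y \<times> ?Y. c1 + (if ?dep p then c2 else 0))"
  proof (rule sum_mono)
    fix p assume "p \<in> ?Y \<times> ?Y"
    then show "real (card {H\<in>?\<Omega>. ?P H p}) \<le> c1 + (if ?dep p then c2 else 0)"
      using card_mat_annihilated_pair_le[of "fst p" r "snd p" J m J'] J J'
      unfolding c1_def c2_def q_def by (auto simp: mem_Times_iff)
  qed
  also have "\<dots> = real (card (?Y \<times> ?Y)) * c1 + real (card {p\<in>?Y \<times> ?Y. ?dep p}) * c2"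
    by (simp add: sum.distrib sum.inter_filter[symmetric])
  also have "\<dots> \<le> (q ^ r - 1)\<^sup>2 * c1 + (q ^ r - 1) * (q - 1) * c2"
  proof (rule add_mono)
    have "real (card ?Y) = q ^ r - 1" by (simp add: card_nonzero_vecs q_def of_nat_diff)
    then show "real (card (?Y \<times> ?Y)) * c1 \<le> (q ^ r - 1)\<^sup>2 * c1"
      by (simp only: card_cartesian_product of_nat_mult power2_eq_square order_refl)
    show "real (card {p\<in>?Y \<times> ?Y. ?dep p}) * c2 \<le> (q ^ r - 1) * (q - 1) * c2"
      using card_dependent_pairs_le[of r, where 'f = 'f]
      by (intro mult_right_mono) (simp_all add: c2_def q_def)
  qed
  finally show ?thesis by (simp only: c1_def c2_def)
qed

lemma sum_witness_count:
  "(\<Sum>H\<in>(carrier_mat r m :: 'f::{field,finite} mat set). witness_count H s) * CARD('f) ^ (m - s)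
    = card (subsets_of_size m s) * ((CARD('f) ^ r - 1) * CARD('f) ^ (r * m))"
proof -
  let ?S = "subsets_of_size m s" and ?\<Omega> = "carrier_mat r m :: 'f mat set"
  have "(\<Sum>H\<in>?\<Omega>. witness_count H s)
      = (\<Sum>H\<in>?\<Omega>. \<Sum>E\<in>?S. card (col_annihilators H ({0..<m} - E)))"
    by (intro sum.cong) (simp_all add: witness_count_def)
  also have "\<dots> = (\<Sum>E\<in>?S. \<Sum>H\<in>?\<Omega>. card (col_annihilators H ({0..<m} - E)))"
    by (rule sum.swap)
  finally have "(\<Sum>H\<in>?\<Omega>. witness_count H s) * CARD('f) ^ (m - s)
      = (\<Sum>E\<in>?S. (\<Sum>H\<in>?\<Omega>. card (col_annihilators H ({0..<m} - E))) * CARD('f) ^ (m - s))"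
    by (simp add: sum_distrib_right)
  also have "\<dots> = (\<Sum>E\<in>?S. (CARD('f) ^ r - 1) * CARD('f) ^ (r * m))"
  proof (rule sum.cong[OF refl])
    fix E assume E: "E \<in> ?S"
    show "(\<Sum>H\<in>?\<Omega>. card (col_annihilators H ({0..<m} - E))) * CARD('f) ^ (m - s)
        = (CARD('f) ^ r - 1) * CARD('f) ^ (r * m)"
      using sum_card_col_annihilators[OF complement_subsets_of_size(1)[OF E], of r, where 'f = 'f]
      by (simp add: complement_subsets_of_size(2)[OF E])
  qed
  finally show ?thesis by simp
qed

lemma sum_witness_count_sq_le:
  fixes r m s :: nat
  defines "q \<equiv> real CARD('f::{field,finite})" and "S \<equiv> subsets_of_size m s"
  shows "(\<Sum>H\<in>(carrier_mat r m :: 'f mat set). (real (witness_count H s))\<^sup>2)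
    \<le> q ^ (r * m) * ((real (card S) * (q ^ r - 1) / q ^ (m - s))\<^sup>2
        + (q - 1) * (q ^ r - 1) * (\<Sum>E\<in>S. \<Sum>E'\<in>S. 1 / q ^ card (({0..<m} - E) \<union> ({0..<m} - E'))))"
proof -
  let ?\<Omega> = "carrier_mat r m :: 'f mat set" and ?A = "\<lambda>E. {0..<m} - E"
  let ?c = "\<lambda>H E. real (card (col_annihilators H (?A E)))"
  have "(real (witness_count H s))\<^sup>2 = (\<Sum>E\<in>S. \<Sum>E'\<in>S. ?c H E * ?c H E')" if "H \<in> ?\<Omega>" for H
    using that by (simp add: witness_count_def S_def power2_eq_square sum_product)
  then have "(\<Sum>H\<in>?\<Omega>. (real (witness_count H s))\<^sup>2) = (\<Sum>E\<in>S. \<Sum>E'\<in>S. \<Sum>H\<in>?\<Omega>. ?c H E * ?c H E')"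
    by (simp add: sum.swap[of _ ?\<Omega>] cong: sum.cong)
  also have "\<dots> \<le> (\<Sum>E\<in>S. \<Sum>E'\<in>S. q ^ (r * m) *
      ((q ^ r - 1)\<^sup>2 / (q ^ (m - s))\<^sup>2 + (q - 1) * (q ^ r - 1) * (1 / q ^ card (?A E \<union> ?A E'))))"
  proof (intro sum_mono)
    fix E E' assume "E \<in> S" "E' \<in> S"
    moreover have "q > 0" by (simp add: q_def)
    ultimately show "(\<Sum>H\<in>?\<Omega>. ?c H E * ?c H E') \<le> q ^ (r * m) *
      ((q ^ r - 1)\<^sup>2 / (q ^ (m - s))\<^sup>2 + (q - 1) * (q ^ r - 1) * (1 / q ^ card (?A E \<union> ?A E')))"
      using sum_card_col_annihilators_mult[of "?A E" m "?A E'" r, where 'f = 'f]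
        complement_subsets_of_size[of E m s] complement_subsets_of_size[of E' m s]
      by (simp add: S_def q_def power_add power2_eq_square field_simps)
  qed
  also have "\<dots> = q ^ (r * m) * (real (card S) * real (card S) * ((q ^ r - 1)\<^sup>2 / (q ^ (m - s))\<^sup>2)
      + (q - 1) * (q ^ r - 1) * (\<Sum>E\<in>S. \<Sum>E'\<in>S. 1 / q ^ card (?A E \<union> ?A E')))"
    by (simp add: distrib_left sum.distrib sum_distrib_left mult_ac)
  also have "\<dots> = q ^ (r * m) * ((real (card S) * (q ^ r - 1) / q ^ (m - s))\<^sup>2
        + (q - 1) * (q ^ r - 1) * (\<Sum>E\<in>S. \<Sum>E'\<in>S. 1 / q ^ card (?A E \<union> ?A E')))"
    by (simp add: power_divide power_mult_distrib power2_eq_square)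
  finally show ?thesis .
qed

lemma sum_subsets_pow_card_le:
  fixes c x :: real
  assumes U: "finite U" and A: "A \<subseteq> U" and c: "0 \<le> c" and x: "0 \<le> x"
  shows "(\<Sum>E | E \<subseteq> U \<and> card E = s. c ^ card (A - E) * x ^ card (U - E))
    \<le> (1 + c * x) ^ card A * (1 + x) ^ card (U - A)"
proof -
  define w where "w u = (if u \<in> A then c else 1) * x" for u
  have "(\<Prod>u\<in>U - E. w u) = c ^ card (A - E) * x ^ card (U - E)" if "E \<subseteq> U" for E
  proof -
    have "(U - E) \<inter> {u. u \<in> A} = A - E" using A by auto
    then show ?thesis
      using U by (simp add: w_def prod.distrib prod.If_cases)
  qed
  then have "(\<Prod>u\<in>U. 1 + w u) = (\<Sum>E\<in>Pow U. c ^ card (A - E) * x ^ card (U - E))"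
    using prod_add[OF U, of "\<lambda>_. 1" w] by simp
  moreover have "(\<Prod>u\<in>U. 1 + w u) = (1 + c * x) ^ card A * (1 + x) ^ card (U - A)"
  proof -
    have "(\<Prod>u\<in>U. 1 + w u) = (\<Prod>u\<in>U. if u \<in> A then 1 + c * x else 1 + x)"
      by (rule prod.cong) (simp_all add: w_def)
    moreover have "U \<inter> {u. u \<in> A} = A" "U \<inter> - {u. u \<in> A} = U - A" using A by auto
    ultimately show ?thesis using U by (simp add: prod.If_cases)
  qed
  moreover have "(\<Sum>E | E \<subseteq> U \<and> card E = s. c ^ card (A - E) * x ^ card (U - E))
      \<le> (\<Sum>E\<in>Pow U. c ^ card (A - E) * x ^ card (U - E))"
    using U c x by (intro sum_mono2) auto
  ultimately show ?thesis by simp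
qed

lemma sum_inv_pow_card_union_le:
  fixes q x :: real and m s :: nat
  assumes q: "0 < q" and x: "0 < x"
  defines "S \<equiv> subsets_of_size m s"
  shows "(\<Sum>E\<in>S. \<Sum>E'\<in>S. 1 / q ^ card (({0..<m} - E) \<union> ({0..<m} - E')))
    \<le> real (card S) * (1 + q * x) ^ (m - s) * (1 + x) ^ s / (x ^ (m - s) * q ^ (2 * (m - s)))"
proof -
  let ?A = "\<lambda>E. {0..<m} - E" and ?t = "m - s"
  have "(\<Sum>E'\<in>S. 1 / q ^ card (?A E \<union> ?A E')) \<le> (1 + q * x) ^ ?t * (1 + x) ^ s / (x ^ ?t * q ^ (2 * ?t))"
    if E: "E \<in> S" for E
  proof -
    have E_sub: "E \<subseteq> {0..<m}" "card E = s" using E by (auto simp: S_def subsets_of_size_def)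
    have "1 / q ^ card (?A E \<union> ?A E') = q ^ card (?A E - E') * x ^ card ({0..<m} - E') / (x ^ ?t * q ^ (2 * ?t))"
      if E': "E' \<in> S" for E'
    proof -
      have "card (?A E \<union> ?A E') + card (?A E \<inter> ?A E') = 2 * ?t"
        using card_Un_Int[of "?A E" "?A E'"] complement_subsets_of_size(2) E E' by (simp add: S_def)
      moreover have "?A E \<inter> ?A E' = ?A E - E'" by auto
      ultimately show ?thesis
        using q x complement_subsets_of_size(2)[of E' m s] E'
        by (simp add: S_def power_add[symmetric] field_simps)
    qed
    then have "(\<Sum>E'\<in>S. 1 / q ^ card (?A E \<union> ?A E'))
        = (\<Sum>E'\<in>S. q ^ card (?A E - E') * x ^ card ({0..<m} - E')) / (x ^ ?t * q ^ (2 * ?t))"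
      by (simp add: sum_divide_distrib)
    also have "\<dots> \<le> (1 + q * x) ^ card (?A E) * (1 + x) ^ card ({0..<m} - ?A E) / (x ^ ?t * q ^ (2 * ?t))"
      using sum_subsets_pow_card_le[of "{0..<m}" "?A E" q x s] q x
      by (intro divide_right_mono) (auto simp: S_def subsets_of_size_def)
    also have "\<dots> = (1 + q * x) ^ ?t * (1 + x) ^ s / (x ^ ?t * q ^ (2 * ?t))"
      using E_sub complement_subsets_of_size(2)[OF E[unfolded S_def]] by (simp add: double_diff)
    finally show ?thesis .
  qed
  then have "(\<Sum>E\<in>S. \<Sum>E'\<in>S. 1 / q ^ card (?A E \<union> ?A E'))
      \<le> (\<Sum>E\<in>S. (1 + q * x) ^ ?t * (1 + x) ^ s / (x ^ ?t * q ^ (2 * ?t)))"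
    by (rule sum_mono)
  then show ?thesis by simp
qed

section \<open>Counting the matrices far from uniform\<close>

lemma card_deviation_le:
  fixes X :: "'a \<Rightarrow> real" and a \<mu> V :: real
  assumes \<Omega>: "finite \<Omega>" and a: "0 < a"
    and mean: "(\<Sum>\<omega>\<in>\<Omega>. X \<omega>) = card \<Omega> * \<mu>"
    and second: "(\<Sum>\<omega>\<in>\<Omega>. (X \<omega>)\<^sup>2) \<le> card \<Omega> * (\<mu>\<^sup>2 + V)"
  shows "card {\<omega>\<in>\<Omega>. a \<le> X \<omega> - \<mu>} * a\<^sup>2 \<le> card \<Omega> * V"
proof -
  have "card {\<omega>\<in>\<Omega>. a \<le> X \<omega> - \<mu>} * a\<^sup>2 = (\<Sum>\<omega>\<in>{\<omega>\<in>\<Omega>. a \<le> X \<omega> - \<mu>}. a\<^sup>2)"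
    by simp
  also have "\<dots> \<le> (\<Sum>\<omega>\<in>{\<omega>\<in>\<Omega>. a \<le> X \<omega> - \<mu>}. (X \<omega> - \<mu>)\<^sup>2)"
    using a by (intro sum_mono power_mono) auto
  also have "\<dots> \<le> (\<Sum>\<omega>\<in>\<Omega>. (X \<omega> - \<mu>)\<^sup>2)"
    using \<Omega> by (intro sum_mono2) auto
  also have "\<dots> = (\<Sum>\<omega>\<in>\<Omega>. (X \<omega>)\<^sup>2 - 2 * \<mu> * X \<omega> + \<mu>\<^sup>2)"
    by (rule sum.cong) (simp_all add: power2_diff mult_ac)
  also have "\<dots> = (\<Sum>\<omega>\<in>\<Omega>. (X \<omega>)\<^sup>2) - 2 * \<mu> * (\<Sum>\<omega>\<in>\<Omega>. X \<omega>) + card \<Omega> * \<mu>\<^sup>2"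
    by (simp add: sum.distrib sum_subtractf sum_distrib_left)
  also have "\<dots> \<le> card \<Omega> * V"
    using mean second by (simp add: power2_eq_square algebra_simps)
  finally show ?thesis .
qed

text \<open>The subtracted term is the mean of \<^term>\<open>witness_count H s\<close> over all \<open>H\<close>.\<close>
lemma deviation_if_far_from_uniform:
  fixes H :: "'f::{field,finite} mat" and r d s :: nat
  defines "S \<equiv> subsets_of_size (r + d + s) s"
  assumes F3: "CARD('f) = 3" and H: "H \<in> carrier_mat r (r + d + s)"
    and far: "1 / 3 ^ d < stat_dist S (unif_mass S) (unif_mass (good_sets H s))"
  shows "real (card S) / 3 ^ d \<le> real (witness_count H s) - real (card S) * (3 ^ r - 1) / 3 ^ (r + d)"
proof -
  let ?N = "real (card S)" and ?G = "good_sets H s"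
  have N: "0 < ?N" by (simp add: S_def card_subsets_of_size)
  have GS: "?G \<subseteq> S" using H by (auto simp: good_sets_def S_def)
  have "1 / 3 ^ d < real (card (S - ?G)) / ?N"
    using far stat_dist_unif_subset[OF _ GS] N by (force simp: S_def finite_subsets_of_size)
  then have far_count: "?N / 3 ^ d < real (card (S - ?G))"
    using N by (simp add: field_simps)
  have "2 * card (S - ?G) \<le> witness_count H s"
    using witness_count_ge[OF H, of s] F3 by (simp add: S_def)
  then have "2 * real (card (S - ?G)) \<le> real (witness_count H s)"
    by (metis of_nat_le_iff of_nat_mult of_nat_numeral)
  moreover have "?N * (3 ^ r - 1) / 3 ^ (r + d) \<le> ?N / 3 ^ d"
    using N by (simp add: power_add field_simps)
  ultimately show ?thesis using far_count by linarith
qed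

lemma card_far_from_uniform_mult_sq_le:
  fixes r d s m :: nat
  defines "S \<equiv> subsets_of_size m s"
  assumes F3: "CARD('f::{field,finite}) = 3" and m: "m = r + d + s"
  shows "real (card {H\<in>(carrier_mat r m :: 'f mat set).
            1 / 3 ^ d < stat_dist S (unif_mass S) (unif_mass (good_sets H s))}) * (real (card S) / 3 ^ d)\<^sup>2
    \<le> 3 ^ (r * m) * (2 * (3 ^ r - 1) * (\<Sum>E\<in>S. \<Sum>E'\<in>S. 1 / 3 ^ card (({0..<m} - E) \<union> ({0..<m} - E'))))"
proof -
  let ?\<Omega> = "carrier_mat r m :: 'f mat set" and ?N = "real (card S)"
  let ?far = "{H\<in>?\<Omega>. 1 / 3 ^ d < stat_dist S (unif_mass S) (unif_mass (good_sets H s))}"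
  define \<mu> where "\<mu> = ?N * (3 ^ r - 1) / 3 ^ (r + d)"
  define V where "V = 2 * (3 ^ r - 1) * (\<Sum>E\<in>S. \<Sum>E'\<in>S. 1 / (3::real) ^ card (({0..<m} - E) \<union> ({0..<m} - E')))"
  have N: "0 < ?N" by (simp add: S_def card_subsets_of_size m)
  have card\<Omega>: "real (card ?\<Omega>) = 3 ^ (r * m)" by (simp add: card_carrier_mat F3)
  have t: "m - s = r + d" by (simp add: m)
  have "(\<Sum>H\<in>?\<Omega>. real (witness_count H s)) * 3 ^ (r + d) = 3 ^ (r * m) * \<mu> * 3 ^ (r + d)"
    using arg_cong[OF sum_witness_count[where r = r and m = m and s = s, where 'f = 'f], of real] F3
    by (simp add: \<mu>_def t S_def of_nat_diff)
  then have mean: "(\<Sum>H\<in>?\<Omega>. real (witness_count H s)) = card ?\<Omega> * \<mu>"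
    by (simp add: card\<Omega>)
  have second: "(\<Sum>H\<in>?\<Omega>. (real (witness_count H s))\<^sup>2) \<le> card ?\<Omega> * (\<mu>\<^sup>2 + V)"
    using sum_witness_count_sq_le[where r = r and m = m and s = s, where 'f = 'f] F3
    by (simp add: card\<Omega> \<mu>_def V_def t S_def)
  have "?far \<subseteq> {H\<in>?\<Omega>. ?N / 3 ^ d \<le> real (witness_count H s) - \<mu>}"
    using deviation_if_far_from_uniform[OF F3] by (auto simp: \<mu>_def S_def m)
  then have "card ?far \<le> card {H\<in>?\<Omega>. ?N / 3 ^ d \<le> real (witness_count H s) - \<mu>}"
    by (rule card_mono[rotated]) (simp add: finite_carrier_mat)
  then have "real (card ?far) * (?N / 3 ^ d)\<^sup>2
      \<le> real (card {H\<in>?\<Omega>. ?N / 3 ^ d \<le> real (witness_count H s) - \<mu>}) * (?N / 3 ^ d)\<^sup>2"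
    by (simp add: mult_right_mono)
  also have "\<dots> \<le> card ?\<Omega> * V"
    by (rule card_deviation_le[OF finite_carrier_mat _ mean second]) (use N in simp)
  finally show ?thesis by (simp add: card\<Omega> V_def)
qed

lemma card_far_from_uniform_le:
  fixes r d s m :: nat and x :: real
  defines "S \<equiv> subsets_of_size m s"
  assumes F3: "CARD('f::{field,finite}) = 3" and m: "m = r + d + s" and x: "0 < x"
  shows "real (card {H\<in>(carrier_mat r m :: 'f mat set).
            1 / 3 ^ d < stat_dist S (unif_mass S) (unif_mass (good_sets H s))}) / 3 ^ (r * m)
    \<le> 2 * (1 + 3 * x) ^ (r + d) * (1 + x) ^ s / (x ^ (r + d) * 3 ^ r * real (card S))"
proof -
  let ?N = "real (card S)"
  let ?far = "{H\<in>(carrier_mat r m :: 'f mat set). 1 / 3 ^ d < stat_dist S (unif_mass S) (unif_mass (good_sets H s))}"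
  define \<Sigma> where "\<Sigma> = (\<Sum>E\<in>S. \<Sum>E'\<in>S. 1 / (3::real) ^ card (({0..<m} - E) \<union> ({0..<m} - E')))"
  define g where "g = (1 + 3 * x) ^ (r + d) * (1 + x) ^ s / x ^ (r + d)"
  have N: "0 < ?N" by (simp add: S_def card_subsets_of_size m)
  have "\<Sigma> \<le> ?N * g / 3 ^ (2 * (r + d))"
    using sum_inv_pow_card_union_le[of 3 x m s] x by (simp add: \<Sigma>_def S_def m g_def mult_ac)
  moreover have "0 \<le> \<Sigma>" by (simp add: \<Sigma>_def sum_nonneg)
  ultimately have "2 * (3 ^ r - 1) * \<Sigma> \<le> 2 * 3 ^ r * (?N * g / 3 ^ (2 * (r + d)))"
    by (intro mult_mono) auto
  also have "\<dots> = 2 * ?N * g / (3 ^ r * 3 ^ (2 * d))"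
  proof -
    have "(3::real) ^ (2 * (r + d)) = 3 ^ r * (3 ^ r * 3 ^ (2 * d))"
      by (simp add: mult_2 power_add)
    then show ?thesis by simp
  qed
  finally have V: "2 * (3 ^ r - 1) * \<Sigma> \<le> 2 * ?N * g / (3 ^ r * 3 ^ (2 * d))" .
  have "real (card ?far) * (?N / 3 ^ d)\<^sup>2 \<le> 3 ^ (r * m) * (2 * (3 ^ r - 1) * \<Sigma>)"
    using card_far_from_uniform_mult_sq_le[OF F3 m] by (simp only: \<Sigma>_def S_def)
  also have "\<dots> \<le> 3 ^ (r * m) * (2 * ?N * g / (3 ^ r * 3 ^ (2 * d)))"
    using V by (rule mult_left_mono) simp
  finally have "real (card ?far) * (?N / 3 ^ d)\<^sup>2 \<le> 3 ^ (r * m) * (2 * ?N * g / (3 ^ r * 3 ^ (2 * d)))" .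
  then have far: "real (card ?far) * ?N \<le> 3 ^ (r * m) * (2 * g / 3 ^ r)"
    using N by (simp add: power_divide power_mult field_simps power2_eq_square)
  have "real (card ?far) / 3 ^ (r * m) = real (card ?far) * ?N / (3 ^ (r * m) * ?N)"
    using N by simp
  also have "\<dots> \<le> 3 ^ (r * m) * (2 * g / 3 ^ r) / (3 ^ (r * m) * ?N)"
    using far N by (intro divide_right_mono) simp_all
  also have "\<dots> = 2 * g / (3 ^ r * ?N)"
    by simp
  finally show ?thesis by (simp add: g_def mult_ac)
qed

lemma powr_real_mult_log:
  fixes b z :: real
  assumes "0 < b" "b \<noteq> 1" "0 < z"
  shows "b powr (real n * log b z) = z ^ n"
proof -
  have "b powr (real n * log b z) = (b powr log b z) powr real n" by (simp add: powr_powr mult.commute)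
  also have "\<dots> = z ^ n" using assms by (simp add: powr_realpow)
  finally show ?thesis .
qed

lemma powr_gamma_exp_objective:
  fixes k d m :: nat and x :: real
  defines "R \<equiv> real k / real m" and "\<delta> \<equiv> real d / real m"
  assumes dk: "d \<le> k" and km: "k \<le> m" and m: "0 < m" and x: "0 < x"
  shows "3 powr (real m * ((1 - R + \<delta>) * log 3 ((1 + 3 * x) / x) + (R - \<delta>) * log 3 (1 + x)))
    = (1 + 3 * x) ^ (m - k + d) * (1 + x) ^ (k - d) / x ^ (m - k + d)"
proof -
  define y where "y = (1 + 3 * x) / x"
  have y: "0 < y" using x unfolding y_def by (intro divide_pos_pos) auto
  have ts: "real m * (1 - R + \<delta>) = real (m - k + d)" "real m * (R - \<delta>) = real (k - d)"
    using dk km m by (simp_all add: R_def \<delta>_def of_nat_diff field_simps)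
  have "real m * ((1 - R + \<delta>) * log 3 y + (R - \<delta>) * log 3 (1 + x))
      = (real m * (1 - R + \<delta>)) * log 3 y + (real m * (R - \<delta>)) * log 3 (1 + x)"
    by (simp add: algebra_simps)
  also have "\<dots> = real (m - k + d) * log 3 y + real (k - d) * log 3 (1 + x)"
    by (simp only: ts)
  finally have "3 powr (real m * ((1 - R + \<delta>) * log 3 y + (R - \<delta>) * log 3 (1 + x)))
      = 3 powr (real (m - k + d) * log 3 y) * 3 powr (real (k - d) * log 3 (1 + x))"
    by (simp only: powr_add)
  also have "\<dots> = y ^ (m - k + d) * (1 + x) ^ (k - d)"
  proof -
    have "3 powr (real (m - k + d) * log 3 y) = y ^ (m - k + d)"
      by (rule powr_real_mult_log) (use y in auto)
    moreover have "3 powr (real (k - d) * log 3 (1 + x)) = (1 + x) ^ (k - d)"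
      by (rule powr_real_mult_log) (use x in auto)
    ultimately show ?thesis by (simp only:)
  qed
  also have "\<dots> = (1 + 3 * x) ^ (m - k + d) * (1 + x) ^ (k - d) / x ^ (m - k + d)"
    unfolding y_def by (simp only: power_divide times_divide_eq_left)
  finally show ?thesis unfolding y_def .
qed

text \<open>The infimum defining \<^const>\<open>gamma_exp\<close> need not be attained; a point within
  \<open>1 / m\<close> of it costs the factor \<open>3\<close>.\<close>
lemma gamma_exp_approx:
  fixes k d m :: nat
  assumes dk: "d \<le> k" and km: "k \<le> m" and m: "0 < m"
  obtains x :: real where "0 < x"
    "(1 + 3 * x) ^ (m - k + d) * (1 + x) ^ (k - d) / (x ^ (m - k + d) * 3 ^ (m - k))
       < 3 * 3 powr (real m * gamma_exp (real k / real m) (real d / real m))"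
proof -
  define R where "R = real k / real m"
  define \<delta> where "\<delta> = real d / real m"
  define F where "F x = (1 - R + \<delta>) * log 3 ((1 + 3 * x) / x) + (R - \<delta>) * log 3 (1 + x)" for x
  define I where "I = (INF x\<in>{0<..}. F x)"
  have "Inf (F ` {0<..}) < I + 1 / real m" using m by (simp add: I_def)
  moreover have "F ` {0<..} \<noteq> {}" by simp
  ultimately obtain x where x: "0 < x" "F x < I + 1 / real m"
    using cInf_lessD[of "F ` {0<..}"] by blast
  have "(1 + 3 * x) ^ (m - k + d) * (1 + x) ^ (k - d) / (x ^ (m - k + d) * 3 ^ (m - k))
      = 3 powr (real m * F x) / 3 ^ (m - k)"
    using powr_gamma_exp_objective[OF dk km m x(1)] by (simp add: F_def R_def \<delta>_def)
  also have "\<dots> = 3 powr (real m * F x - real (m - k))"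
    by (simp add: powr_diff powr_realpow)
  also have "\<dots> < 3 powr (real m * gamma_exp R \<delta> + 1)"
  proof (rule powr_less_mono)
    have gamma: "gamma_exp R \<delta> = I - 1 + R" unfolding gamma_exp_def I_def F_def ..
    have "real m * gamma_exp R \<delta> = real m * I - real (m - k)"
      unfolding gamma unfolding R_def using km m by (simp add: of_nat_diff field_simps)
    moreover have "real m * F x < real m * I + 1"
      using x(2) m by (simp add: field_simps)
    ultimately show "real m * F x - real (m - k) < real m * gamma_exp R \<delta> + 1"
      by linarith
  qed simp
  also have "\<dots> = 3 * 3 powr (real m * gamma_exp R \<delta>)"
    by (simp add: powr_add)
  finally show ?thesis
    using that x(1) unfolding R_def \<delta>_def by blast
qed

lemma three_powr_le:
  fixes a :: real
  assumes "1 \<le> d"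
  shows "3 * 3 powr a \<le> 3 ^ d + 2 * 3 powr (2 * real d + a)"
proof -
  have "(9::real) \<le> 3 powr (2 * real d)"
    using assms powr_mono[of 2 "2 * real d" 3] by simp
  then have "9 * 3 powr a \<le> 3 powr (2 * real d + a)"
    by (simp add: powr_add)
  moreover have "0 \<le> 3 powr a" "(0::real) \<le> 3 ^ d" by simp_all
  ultimately show ?thesis by linarith
qed

theorem lemma7:
  fixes n k d :: nat
  assumes F3: "card (UNIV :: 'f set) = 3"
    and even_n: "even n"
    and k_le: "k \<le> n div 2"
    and d_range: "1 \<le> d" "d \<le> k"
  shows
    "(let m = n div 2;
          R = real k / real m;
          \<delta> = real d / real m;
          \<gamma> = gamma_exp R \<delta>;
          Hs = (carrier_mat (m - k) m :: ('f::{field,finite}) mat set);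
          bad = {H \<in> Hs. stat_dist (subsets_of_size m (k - d))
                           (unif_mass (subsets_of_size m (k - d)))
                           (unif_mass (good_sets H (k - d))) > 1 / 3 ^ d}
      in real (card bad) / real (card Hs)
           \<le> 2 / real (m choose (k - d)) * (3 ^ d + 2 * 3 powr (2 * real d + \<gamma> * real n / 2)))"
proof -
  define m where "m = n div 2"
  define r s where "r = m - k" and "s = k - d"
  define \<gamma> where "\<gamma> = gamma_exp (real k / real m) (real d / real m)"
  define S where "S = subsets_of_size m s"
  have m: "m = r + d + s" and "0 < m" using k_le d_range by (auto simp: m_def r_def s_def)
  have "n = 2 * m" using even_n by (simp add: m_def)
  then have \<gamma>n: "\<gamma> * real n / 2 = real m * \<gamma>" by simp
  obtain x where x: "0 < x"
    and gx: "(1 + 3 * x) ^ (r + d) * (1 + x) ^ s / (x ^ (r + d) * 3 ^ r) < 3 * 3 powr (real m * \<gamma>)"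
    using gamma_exp_approx[of d k m] d_range k_le \<open>0 < m\<close>
    by (auto simp: r_def s_def \<gamma>_def m_def)
  have N: "0 < real (card S)" by (simp add: S_def card_subsets_of_size m)
  have "real (card {H\<in>(carrier_mat r m :: 'f mat set).
            1 / 3 ^ d < stat_dist S (unif_mass S) (unif_mass (good_sets H s))}) / 3 ^ (r * m)
      \<le> 2 * ((1 + 3 * x) ^ (r + d) * (1 + x) ^ s / (x ^ (r + d) * 3 ^ r)) / real (card S)"
    using card_far_from_uniform_le[OF F3 m x] by (simp add: S_def)
  also have "\<dots> \<le> 2 * (3 * 3 powr (real m * \<gamma>)) / real (card S)"
    using gx N by (intro divide_right_mono) auto
  also have "\<dots> \<le> 2 / real (card S) * (3 ^ d + 2 * 3 powr (2 * real d + \<gamma> * real n / 2))"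
    \<comment> \<open>the stated bound is weaker than the one obtained\<close>
    using three_powr_le[OF d_range(1), of "real m * \<gamma>"] N by (simp add: \<gamma>n divide_right_mono)
  finally show ?thesis
    by (simp add: Let_def card_carrier_mat F3 S_def card_subsets_of_size r_def s_def m_def \<gamma>_def)
qed

end
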